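(* Let $n\ge2$, $p\in(0,1/2)$, $q=1-p$, $\tilde q=1-2p$, and $\beta_n=2^{1/(n-1)}$. Let $X_1,\dots,X_n$ be i.i.d. with $P(X_i=1)=P(X_i=-1)=p$, $P(X_i=0)=1-2p$, and independently let $U_1,\dots,U_n$ be i.i.d. uniform on $[0,1]$ with order statistics $T_1<\dots<T_n$, $T_i$ being the arrival time of $X_i$. For $x\in[0,1]$, the $x$-strategy selects the first $X_i\neq0$ with $T_i>x$ (selecting nothing, i.e. losing, if there is none); it wins if the selected value is $1$ and no later-arriving variable equals $1$, or the selected value is $-1$ and no later-arriving variable equals $-1$. Then its win probability is $$p_n(x)=2\bigl((q+px)^n-(\tilde q+2px)^n\bigr).$$ If $p\ge\frac{\beta_n-1}{2\beta_n-1}$, then $p_n$ attains its maximum over $[0,1]$ at $x_n^\star=\frac{1}{p}\cdot\frac{q-\tilde q\beta_n}{2\beta_n-1}\in[0,1]$, with maximal value $$p_n(x_n^\star)=2(2\beta_n-1)^{1-n},$$ which does not depend on $p$. Moreover $p_n(x_n^\star)$ is decreasing in $n$ and converges to $1/2$ as $n\to\infty$. *)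

theory Defs
  imports "HOL-Probability.Probability"
begin

text \<open>Distribution of a single X_i: P(X=1)=P(X=-1)=p, P(X=0)=1-2p (valid for 0 \<le> p \<le> 1/2).\<close>
definition X_pmf :: "real \<Rightarrow> int pmf" where
  "X_pmf p = embed_pmf (\<lambda>k. if k = 1 \<or> k = -1 then p else if k = 0 then 1 - 2*p else 0)"

definition model :: "nat \<Rightarrow> real \<Rightarrow> ((nat \<Rightarrow> int) \<times> (nat \<Rightarrow> real)) measure" where
  "model n p = (PiM {..<n} (\<lambda>_. measure_pmf (X_pmf p)))
              \<Otimes>\<^sub>M (PiM {..<n} (\<lambda>_. uniform_measure lborel {0..1::real}))"

text \<open>Order statistics: T i is the (i+1)-th smallest of U_0..U_{n-1}; X_i arrives at time T i.\<close>
definition order_stat :: "nat \<Rightarrow> (nat \<Rightarrow> real) \<Rightarrow> nat \<Rightarrow> real" where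
  "order_stat n U i = sort (map U [0..<n]) ! i"

definition x_wins :: "nat \<Rightarrow> real \<Rightarrow> (nat \<Rightarrow> int) \<Rightarrow> (nat \<Rightarrow> real) \<Rightarrow> bool" where
  "x_wins n x X U \<longleftrightarrow>
     (\<exists>i<n. X i \<noteq> 0 \<and> order_stat n U i > x
        \<and> (\<forall>j<i. order_stat n U j > x \<longrightarrow> X j = 0)
        \<and> (\<forall>j. i < j \<and> j < n \<longrightarrow> X j \<noteq> X i))"

definition win_prob :: "nat \<Rightarrow> real \<Rightarrow> real \<Rightarrow> real" where
  "win_prob n p x = measure (model n p) {XU \<in> space (model n p). x_wins n x (fst XU) (snd XU)}"

definition p_n :: "nat \<Rightarrow> real \<Rightarrow> real \<Rightarrow> real" where
  "p_n n p x = 2 * (((1 - p) + p * x) ^ n - ((1 - 2*p) + 2 * p * x) ^ n)"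

definition beta :: "nat \<Rightarrow> real" where
  "beta n = 2 powr (1 / (real n - 1))"

definition x_star :: "nat \<Rightarrow> real \<Rightarrow> real" where
  "x_star n p = (1 / p) * (((1 - p) - (1 - 2*p) * beta n) / (2 * beta n - 1))"

definition opt_val :: "nat \<Rightarrow> real" where
  "opt_val n = 2 * (2 * beta n - 1) powr (1 - real n)"

end

theory Submission
  imports Defs
begin

text \<open>
  Let K be the number of arrival times U_j that are \<le> x.  Because the arrival
  times T_0 < ... < T_{n-1} are the sorted U's, the condition T_i > x is equivalent to K \<le> i,
  so the x-strategy wins iff the discrete strategy "skip the first K arrivals, then take the
  first non-zero value" wins on the sequence X.  That discrete event is a disjoint union of
  explicit value patterns, and independence of the X_j gives its probability
  2((1-p)^(n-K) - (1-2p)^(n-K)).  Integrating over the independent U's, where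
  E[c^(n-K)] = (c + (1-c)x)^n by independence again, yields p_n(x) via Fubini.

  The optimisation is one-variable calculus: with a = (1-p) + px \<in> [1/2,1] we have
  p_n(x) = 2(a^n - (2a-1)^n), whose derivative changes sign exactly at a = \<beta>/(2\<beta>-1).
  Finally opt_val m = 2 exp(-h(t)/t) with t = 1/(m-1) and h(t) = ln(2\<cdot>2^t - 1); h is
  concave with h(0) = 0, so h(t)/t decreases in t (hence opt_val decreases in m) and tends
  to h'(0) = 2 ln 2 as t \<rightarrow> 0, which gives the limit 2 exp(-2 ln 2) = 1/2.
\<close>


subsection \<open>The law of a single value X_j\<close>

lemma X_pmf_weights_ok:
  assumes "0 \<le> p" "p \<le> 1/2"
  defines "f \<equiv> (\<lambda>k::int. if k = 1 \<or> k = -1 then p else if k = 0 then 1 - 2*p else 0)"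
  shows "\<And>x. 0 \<le> f x" "(\<integral>\<^sup>+x. ennreal (f x) \<partial>count_space UNIV) = 1"
proof -
  show "\<And>x. 0 \<le> f x" using assms by (auto simp: f_def)
  have "(\<integral>\<^sup>+x. ennreal (f x) \<partial>count_space UNIV) = (\<Sum>x\<in>{-1,0,1}. ennreal (f x))"
    by (rule nn_integral_count_space') (auto simp: f_def)
  also have "\<dots> = ennreal (p + (1-2*p) + p)" using assms
    by (simp add: f_def ennreal_plus[symmetric] del: ennreal_plus)
  finally show "(\<integral>\<^sup>+x. ennreal (f x) \<partial>count_space UNIV) = 1" by simp
qed

lemma pmf_X_pmf:
  assumes "0 \<le> p" "p \<le> 1/2"
  shows "pmf (X_pmf p) k = (if k = 1 \<or> k = -1 then p else if k = 0 then 1 - 2*p else 0)"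
  unfolding X_pmf_def by (rule pmf_embed_pmf[OF X_pmf_weights_ok[OF assms]])

lemma set_pmf_X_pmf:
  assumes "0 \<le> p" "p \<le> 1/2"
  shows "set_pmf (X_pmf p) \<subseteq> {-1,0,1}"
  unfolding X_pmf_def set_embed_pmf[OF X_pmf_weights_ok[OF assms]] by auto

lemma integral_X_pmf:
  assumes "0 \<le> p" "p \<le> 1/2"
  shows "(\<integral>v. f v \<partial>measure_pmf (X_pmf p)) = f (-1) * p + f 0 * (1 - 2*p) + f 1 * p"
  using set_pmf_X_pmf[OF assms]
  by (subst integral_measure_pmf_real[of "{-1,0,1}"]) (auto simp: pmf_X_pmf[OF assms])

text \<open>Every set of value sequences is measurable, since the product space is countable.\<close>
lemma sets_PiM_X_pmf:
  fixes n :: nat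
  assumes "S \<subseteq> space (PiM {..<n} (\<lambda>_. measure_pmf (X_pmf p)))"
  shows "S \<in> sets (PiM {..<n} (\<lambda>_. measure_pmf (X_pmf p)))"
proof (rule sets.countable)
  have space: "space (PiM {..<n} (\<lambda>_. measure_pmf (X_pmf p))) = PiE {..<n} (\<lambda>_. UNIV)"
    by (simp add: space_PiM)
  show "countable S"
    using assms unfolding space by (rule countable_subset) (simp add: countable_PiE)
  fix a assume "a \<in> S"
  hence "a \<in> extensional {..<n}" using assms unfolding space by (auto simp: PiE_def)
  hence "{a} = PiE {..<n} (\<lambda>i. {a i})" by (simp add: PiE_singleton)
  thus "{a} \<in> sets (PiM {..<n} (\<lambda>_. measure_pmf (X_pmf p)))"
    by (simp add: sets_PiM_I_finite)
qed


subsection \<open>The discrete game: skip the first k positions\<close>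

definition wins_after :: "nat \<Rightarrow> nat \<Rightarrow> (nat \<Rightarrow> int) \<Rightarrow> bool" where
  "wins_after n k X \<longleftrightarrow>
     (\<exists>i<n. X i \<noteq> 0 \<and> k \<le> i \<and> (\<forall>j<i. k \<le> j \<longrightarrow> X j = 0) \<and> (\<forall>j. i < j \<and> j < n \<longrightarrow> X j \<noteq> X i))"

definition pattern_at :: "nat \<Rightarrow> nat \<Rightarrow> int \<Rightarrow> nat \<Rightarrow> int \<Rightarrow> bool" where
  "pattern_at k i s j v = (if j < k then True else if j < i then v = 0 else if j = i then v = s else v \<noteq> s)"

definition win_pattern :: "nat \<Rightarrow> nat \<Rightarrow> nat \<Rightarrow> int \<Rightarrow> (nat \<Rightarrow> int) \<Rightarrow> bool" where
  "win_pattern n k i s X \<longleftrightarrow> (\<forall>j\<in>{..<n}. pattern_at k i s j (X j))"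

text \<open>A sequence matches at most one winning pattern: the position i is the first non-zero
  value from k on, and s is the value there.\<close>
lemma win_pattern_unique:
  assumes "win_pattern n k i s X" "win_pattern n k i' s' X"
    and "i \<in> {k..<n}" "i' \<in> {k..<n}" "s \<noteq> 0" "s' \<noteq> 0"
  shows "i = i' \<and> s = s'"
proof -
  have at: "pattern_at k i s i (X i)" "pattern_at k i' s' i' (X i')"
      "pattern_at k i' s' i (X i)" "pattern_at k i s i' (X i')"
    using assms(1-4) unfolding win_pattern_def by auto
  hence val: "X i = s" "X i' = s'" using assms(3,4) by (auto simp: pattern_at_def)
  have "\<not> i < i'" and "\<not> i' < i" using at val assms(3-6) by (auto simp: pattern_at_def)
  thus ?thesis using val by auto
qed

lemma wins_after_iff_win_pattern:
  assumes "\<forall>j<n. X j \<in> {-1,0,1}"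
  shows "wins_after n k X \<longleftrightarrow> (\<exists>i\<in>{k..<n}. \<exists>s\<in>{1,-1}. win_pattern n k i s X)"
proof
  assume "wins_after n k X"
  then obtain i where i: "i < n" "X i \<noteq> 0" "k \<le> i" "\<forall>j<i. k \<le> j \<longrightarrow> X j = 0"
      "\<forall>j. i < j \<and> j < n \<longrightarrow> X j \<noteq> X i"
    unfolding wins_after_def by blast
  have "X i \<in> {1,-1}" using assms i by auto
  moreover have "win_pattern n k i (X i) X"
    using i unfolding win_pattern_def pattern_at_def by auto
  ultimately show "\<exists>i\<in>{k..<n}. \<exists>s\<in>{1,-1}. win_pattern n k i s X" using i by auto
next
  assume "\<exists>i\<in>{k..<n}. \<exists>s\<in>{1,-1}. win_pattern n k i s X"
  then obtain i s where "i \<in> {k..<n}" "s \<in> {1,-1}" "win_pattern n k i s X" by blast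
  thus "wins_after n k X"
    unfolding wins_after_def win_pattern_def pattern_at_def
    by (intro exI[of _ i]) (auto split: if_splits)
qed

lemma prod_of_bool:
  assumes "finite A"
  shows "(\<Prod>x\<in>A. (of_bool (P x) :: 'b :: comm_semiring_1)) = of_bool (\<forall>x\<in>A. P x)"
  using assms by (induction A rule: finite_induct) auto

lemma indicator_wins_after:
  assumes "\<forall>j<n. X j \<in> {-1,0,1}"
  shows "(of_bool (wins_after n k X) :: real)
       = (\<Sum>i\<in>{k..<n}. \<Sum>s\<in>{1,-1::int}. \<Prod>j<n. of_bool (pattern_at k i s j (X j)))"
proof -
  define S where "S = ({k..<n} \<times> {1,-1::int}) \<inter> {ps. win_pattern n k (fst ps) (snd ps) X}"
  have fin: "finite S" unfolding S_def by auto
  have "card S \<le> Suc 0"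
    unfolding card_le_Suc0_iff_eq[OF fin]
  proof (intro ballI)
    fix a b assume "a \<in> S" "b \<in> S"
    hence "fst a = fst b \<and> snd a = snd b"
      unfolding S_def by (intro win_pattern_unique) auto
    thus "a = b" by (simp add: prod_eq_iff)
  qed
  hence card: "card S = of_bool (S \<noteq> {})" using fin by (auto simp: le_Suc_eq)
  have "(\<Sum>i\<in>{k..<n}. \<Sum>s\<in>{1,-1::int}. \<Prod>j<n. (of_bool (pattern_at k i s j (X j)) :: real))
      = (\<Sum>i\<in>{k..<n}. \<Sum>s\<in>{1,-1::int}. of_bool (win_pattern n k i s X))"
    unfolding prod_of_bool[OF finite_lessThan] win_pattern_def ..
  also have "\<dots> = (\<Sum>ps\<in>{k..<n} \<times> {1,-1::int}. of_bool (win_pattern n k (fst ps) (snd ps) X))"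
    by (simp only: sum.cartesian_product split_def)
  also have "\<dots> = real (card S)" unfolding S_def by (subst sum_of_bool_eq) auto
  also have "\<dots> = of_bool (S \<noteq> {})" by (simp add: card)
  also have "S \<noteq> {} \<longleftrightarrow> (\<exists>i\<in>{k..<n}. \<exists>s\<in>{1,-1::int}. win_pattern n k i s X)"
    unfolding S_def by force
  also have "\<dots> \<longleftrightarrow> wins_after n k X"
    by (rule wins_after_iff_win_pattern[OF assms, symmetric])
  finally show ?thesis by simp
qed

text \<open>The probability that a single X_j satisfies its constraint in a winning pattern.\<close>
definition pattern_weight :: "real \<Rightarrow> nat \<Rightarrow> nat \<Rightarrow> nat \<Rightarrow> real" where
  "pattern_weight p k i j = (if j < k then 1 else if j < i then 1 - 2*p else if j = i then p else 1 - p)"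

lemma integral_pattern_at:
  assumes "0 \<le> p" "p \<le> 1/2" "s \<in> {1,-1}"
  shows "(\<integral>v. (of_bool (pattern_at k i s j v) :: real) \<partial>measure_pmf (X_pmf p)) = pattern_weight p k i j"
  using assms unfolding integral_X_pmf[OF assms(1,2)] by (auto simp: pattern_at_def pattern_weight_def)

lemma prod_const_ivl:
  fixes c :: "'a :: comm_monoid_mult"
  shows "(\<And>j. j \<in> {a..<b} \<Longrightarrow> f j = c) \<Longrightarrow> (\<Prod>j\<in>{a..<b}. f j) = c ^ (b - a)"
  by (simp add: prod.cong[of _ _ f "\<lambda>_. c"])

lemma prod_pattern_weight:
  assumes "k \<le> i" "i < n"
  shows "(\<Prod>j<n. pattern_weight p k i j) = (1-2*p)^(i-k) * p * (1-p)^(n-1-i)"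
proof -
  let ?w = "pattern_weight p k i"
  have "(\<Prod>j<n. ?w j) = (\<Prod>j\<in>{0..<k}. ?w j) * (\<Prod>j\<in>{k..<n}. ?w j)"
    using assms by (simp add: atLeast0LessThan[symmetric] prod.atLeastLessThan_concat)
  also have "(\<Prod>j\<in>{k..<n}. ?w j) = (\<Prod>j\<in>{k..<i}. ?w j) * (\<Prod>j\<in>{i..<n}. ?w j)"
    using assms by (intro prod.atLeastLessThan_concat[symmetric]) auto
  also have "(\<Prod>j\<in>{i..<n}. ?w j) = ?w i * (\<Prod>j\<in>{Suc i..<n}. ?w j)"
    using assms by (intro prod.atLeast_Suc_lessThan) auto
  also have "(\<Prod>j\<in>{0..<k}. ?w j) = 1" by (subst prod_const_ivl[of _ _ _ 1]) (auto simp: pattern_weight_def)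
  also have "(\<Prod>j\<in>{k..<i}. ?w j) = (1-2*p)^(i-k)" by (subst prod_const_ivl) (auto simp: pattern_weight_def)
  also have "(\<Prod>j\<in>{Suc i..<n}. ?w j) = (1-p)^(n-Suc i)"
    using assms by (subst prod_const_ivl) (auto simp: pattern_weight_def)
  also have "?w i = p" using assms by (simp add: pattern_weight_def)
  finally show ?thesis by simp
qed

text \<open>Summing the pattern probabilities over the winning position is a telescoping
  geometric sum.\<close>
lemma sum_pattern_probabilities:
  fixes p :: real
  assumes "k \<le> n"
  shows "(\<Sum>i\<in>{k..<n}. 2 * ((1-2*p)^(i-k) * p * (1-p)^(n-1-i))) = 2 * ((1-p)^(n-k) - (1-2*p)^(n-k))"
proof -
  let ?G = "\<Sum>r<n-k. (1-p)^(n-k-Suc r) * (1-2*p)^r"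
  have "(\<Sum>i\<in>{k..<n}. 2 * ((1-2*p)^(i-k) * p * (1-p)^(n-1-i)))
      = (\<Sum>r\<in>{0..<n-k}. 2 * ((1-2*p)^r * p * (1-p)^(n-k-Suc r)))"
    by (subst sum.atLeastLessThan_shift_0) (intro sum.cong refl, auto)
  also have "\<dots> = 2 * p * ?G"
    by (simp add: sum_distrib_left atLeast0LessThan mult_ac)
  moreover have "(1-2*p)^(n-k) - (1-p)^(n-k) = ((1-2*p) - (1-p)) * ?G"
    by (rule power_diff_sumr2)
  ultimately show ?thesis by (simp add: algebra_simps)
qed

lemma measure_wins_after:
  assumes p: "0 \<le> p" "p \<le> 1/2" and k: "k \<le> n"
  defines "M \<equiv> PiM {..<n} (\<lambda>_. measure_pmf (X_pmf p))"
  shows "measure M {X \<in> space M. wins_after n k X} = 2*((1-p)^(n-k) - (1-2*p)^(n-k))"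
proof -
  interpret PP: product_prob_space "\<lambda>_. measure_pmf (X_pmf p)" "{..<n}"
    by unfold_locales
  let ?S = "{X \<in> space M. wins_after n k X}"
  let ?pat = "\<lambda>i s X. \<Prod>j<n. (of_bool (pattern_at k i s j (X j)) :: real)"
  have S: "?S \<in> sets M" unfolding M_def by (rule sets_PiM_X_pmf) auto
  have pat_int: "integrable M (?pat i s)" for i s
    unfolding M_def by (rule PP.product_integrable_prod)
      (auto simp: integrable_measure_pmf_finite finite_subset[OF set_pmf_X_pmf[OF p]])
  have X_values: "AE X in M. \<forall>j\<in>{..<n}. X j \<in> {-1,0,1}"
    unfolding M_def
  proof (rule AE_finite_allI)
    fix j assume j: "j \<in> {..<n}"
    show "AE X in PiM {..<n} (\<lambda>_. measure_pmf (X_pmf p)). X j \<in> {-1,0,1}"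
      by (rule AE_PiM_component[OF _ j])
        (use set_pmf_X_pmf[OF p] in \<open>auto simp: AE_measure_pmf_iff prob_space_measure_pmf\<close>)
  qed simp
  have "measure M ?S = (\<integral>X. indicator ?S X \<partial>M)" by (simp add: Int_absorb2)
  also have "\<dots> = (\<integral>X. (\<Sum>i\<in>{k..<n}. \<Sum>s\<in>{1,-1::int}. ?pat i s X) \<partial>M)"
  proof (rule integral_cong_AE)
    show "indicator ?S \<in> borel_measurable M" using S by simp
    show "(\<lambda>X. \<Sum>i\<in>{k..<n}. \<Sum>s\<in>{1,-1::int}. ?pat i s X) \<in> borel_measurable M"
      unfolding M_def by measurable
    show "AE X in M. indicator ?S X = (\<Sum>i\<in>{k..<n}. \<Sum>s\<in>{1,-1::int}. ?pat i s X)"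
      using X_values AE_space
    proof eventually_elim
      case (elim X)
      thus ?case using indicator_wins_after[of n X k] by (simp add: indicator_def)
    qed
  qed
  also have "\<dots> = (\<Sum>i\<in>{k..<n}. \<Sum>s\<in>{1,-1::int}. \<integral>X. ?pat i s X \<partial>M)"
    by (simp add: Bochner_Integration.integral_sum Bochner_Integration.integrable_sum pat_int)
  also have "\<dots> = (\<Sum>i\<in>{k..<n}. \<Sum>s\<in>{1,-1::int}. \<Prod>j<n. pattern_weight p k i j)"
    unfolding M_def
    by (intro sum.cong refl, subst PP.product_integral_prod)
       (auto simp: integral_pattern_at[OF p] integrable_measure_pmf_finite finite_subset[OF set_pmf_X_pmf[OF p]])
  also have "\<dots> = (\<Sum>i\<in>{k..<n}. 2 * ((1-2*p)^(i-k) * p * (1-p)^(n-1-i)))"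
    by (intro sum.cong refl) (simp add: prod_pattern_weight)
  also have "\<dots> = 2*((1-p)^(n-k) - (1-2*p)^(n-k))" by (rule sum_pattern_probabilities[OF k])
  finally show ?thesis .
qed


subsection \<open>The arrival times\<close>

definition arrivals_upto :: "nat \<Rightarrow> real \<Rightarrow> (nat \<Rightarrow> real) \<Rightarrow> nat" where
  "arrivals_upto n x U = card {j. j < n \<and> U j \<le> x}"

lemma arrivals_upto_le: "arrivals_upto n x U \<le> n"
  unfolding arrivals_upto_def by (rule order_trans[OF card_mono[of "{..<n}"]]) auto

lemma sorted_nth_gt_iff:
  fixes s :: "real list"
  assumes "sorted s" "i < length s"
  shows "x < s ! i \<longleftrightarrow> length (filter (\<lambda>u. u \<le> x) s) \<le> i"
  using assms
proof (induction s arbitrary: i)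
  case Nil thus ?case by simp
next
  case (Cons a s)
  show ?case
  proof (cases i)
    case 0
    have "x < a \<longleftrightarrow> filter (\<lambda>u. u \<le> x) (a # s) = []"
      using Cons.prems(1) by (auto simp: filter_empty_conv)
    thus ?thesis using 0 by simp
  next
    case (Suc i')
    have i': "i' < length s" using Cons.prems Suc by simp
    show ?thesis
    proof (cases "a \<le> x")
      case True
      thus ?thesis using Cons.IH[of i'] Cons.prems i' Suc by simp
    next
      case False
      have all: "\<forall>u\<in>set s. x < u" using Cons.prems(1) False by auto
      hence "filter (\<lambda>u. u \<le> x) s = []" by (auto simp: filter_empty_conv)
      moreover have "x < s ! i'" using all i' by auto
      ultimately show ?thesis using False Suc by simp
    qed
  qed
qed

lemma order_stat_gt_iff:
  assumes "i < n"
  shows "x < order_stat n U i \<longleftrightarrow> arrivals_upto n x U \<le> i"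
proof -
  have "x < order_stat n U i \<longleftrightarrow> length (filter (\<lambda>u. u \<le> x) (sort (map U [0..<n]))) \<le> i"
    unfolding order_stat_def by (rule sorted_nth_gt_iff) (use assms in auto)
  also have "length (filter (\<lambda>u. u \<le> x) (sort (map U [0..<n]))) = arrivals_upto n x U"
    unfolding arrivals_upto_def filter_sort length_sort length_filter_conv_card
    by (intro arg_cong[where f=card]) auto
  finally show ?thesis .
qed

lemma x_wins_iff_wins_after: "x_wins n x X U \<longleftrightarrow> wins_after n (arrivals_upto n x U) X"
  unfolding x_wins_def wins_after_def
  by (rule iffI; elim exE conjE; rule_tac x=i in exI; auto simp: order_stat_gt_iff)

lemma prod_step_eq_power:
  "(\<Prod>j<n. if U j \<le> x then 1 else c) = c ^ (n - arrivals_upto n x U)"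
proof -
  have "(\<Prod>j<n. if U j \<le> x then 1 else c) = c ^ card ({..<n} - {j. U j \<le> x})"
    by (subst prod.If_cases) (simp_all add: Diff_eq)
  also have "card ({..<n} - {j. U j \<le> x}) = n - arrivals_upto n x U"
    unfolding arrivals_upto_def
    by (subst card_Diff_subset_Int) (auto intro!: arg_cong[where f="\<lambda>A. n - card A"])
  finally show ?thesis .
qed

abbreviation uniform01 :: "real measure" where
  "uniform01 \<equiv> uniform_measure lborel {0..1}"

lemma prob_space_uniform01: "prob_space uniform01"
  by (rule prob_space_uniform_measure) simp_all

lemma integral_step:
  assumes "0 \<le> x" "x \<le> 1"
  shows "integrable uniform01 (\<lambda>u. if u \<le> x then 1 else c)"
    and "(\<integral>u. (if u \<le> x then 1 else c) \<partial>uniform01) = c + (1-c)*x"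
proof -
  interpret prob_space uniform01 by (rule prob_space_uniform01)
  have eq: "(\<lambda>u. if u \<le> x then 1 else c) = (\<lambda>u. c + (1-c) * indicator {..x} u)"
    by (rule ext) (simp add: indicator_def)
  have fin: "emeasure uniform01 {..x} < \<infinity>" by (simp add: emeasure_eq_measure)
  have ind_int: "integrable uniform01 (indicator {..x} :: real \<Rightarrow> real)"
    using fin by (intro integrable_real_indicator) auto
  have "measure uniform01 {..x} = measure lborel ({0..1} \<inter> {..x}) / measure lborel {0..1::real}"
    by (rule measure_uniform_measure) simp_all
  also have "{0..1} \<inter> {..x} = {0..x}" using assms by auto
  finally have m: "measure uniform01 {..x} = x" using assms by simp
  show "integrable uniform01 (\<lambda>u. if u \<le> x then 1 else c)" unfolding eq
    by (intro Bochner_Integration.integrable_add integrable_mult_right integrable_real_indicator fin) auto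
  show "(\<integral>u. (if u \<le> x then 1 else c) \<partial>uniform01) = c + (1-c)*x" unfolding eq
    by (subst Bochner_Integration.integral_add) (auto simp: m ind_int)
qed

lemma expectation_power_arrivals:
  assumes "0 \<le> x" "x \<le> 1"
  shows "integrable (PiM {..<n} (\<lambda>_. uniform01)) (\<lambda>U. c ^ (n - arrivals_upto n x U))"
    and "(\<integral>U. c ^ (n - arrivals_upto n x U) \<partial>PiM {..<n} (\<lambda>_. uniform01)) = (c + (1-c)*x)^n"
proof -
  interpret PP: product_prob_space "\<lambda>_. uniform01" "{..<n}"
    by (simp add: product_prob_space_def product_sigma_finite_def product_prob_space_axioms_def
        prob_space_uniform01 prob_space_imp_sigma_finite)
  show "integrable (PiM {..<n} (\<lambda>_. uniform01)) (\<lambda>U. c ^ (n - arrivals_upto n x U))"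
    unfolding prod_step_eq_power[symmetric]
    by (rule PP.product_integrable_prod) (auto simp: integral_step assms)
  show "(\<integral>U. c ^ (n - arrivals_upto n x U) \<partial>PiM {..<n} (\<lambda>_. uniform01)) = (c + (1-c)*x)^n"
    unfolding prod_step_eq_power[symmetric]
    by (subst PP.product_integral_prod) (auto simp: integral_step assms)
qed

lemma arrivals_upto_sets:
  "{U \<in> space (PiM {..<n} (\<lambda>_. uniform01)). arrivals_upto n x U = k} \<in> sets (PiM {..<n} (\<lambda>_. uniform01))"
proof -
  have "(\<lambda>U. real (arrivals_upto n x U)) = (\<lambda>U. \<Sum>j<n. indicator {..x} (U j))"
    by (rule ext) (simp add: arrivals_upto_def indicator_def sum.If_cases Int_def conj_commute)
  moreover have "(\<lambda>U. \<Sum>j<n. (indicator {..x} (U j) :: real)) \<in> borel_measurable (PiM {..<n} (\<lambda>_. uniform01))"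
    by measurable
  ultimately have "(\<lambda>U. real (arrivals_upto n x U)) \<in> borel_measurable (PiM {..<n} (\<lambda>_. uniform01))"
    by simp
  hence "{U \<in> space (PiM {..<n} (\<lambda>_. uniform01)). real (arrivals_upto n x U) = real k}
      \<in> sets (PiM {..<n} (\<lambda>_. uniform01))"
    by measurable
  thus ?thesis by simp
qed


subsection \<open>The win probability of the x-strategy\<close>

text \<open>Fubini: integrating the conditional win probability given the arrival times.\<close>
lemma win_prob_eq_p_n:
  assumes p: "0 \<le> p" "p \<le> 1/2" and x: "0 \<le> x" "x \<le> 1"
  shows "win_prob n p x = p_n n p x"
proof -
  define M1 where "M1 = PiM {..<n} (\<lambda>_. measure_pmf (X_pmf p))"
  define M2 where "M2 = PiM {..<n} (\<lambda>_. uniform01)"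
  interpret P1: prob_space M1 unfolding M1_def by (intro prob_space_PiM prob_space_measure_pmf)
  interpret P2: prob_space M2 unfolding M2_def by (intro prob_space_PiM prob_space_uniform01)
  interpret P12: pair_prob_space M1 M2 by unfold_locales
  define A where "A = {XU \<in> space (M1 \<Otimes>\<^sub>M M2). x_wins n x (fst XU) (snd XU)}"
  have "A = (\<Union>k\<in>{..n}. {X \<in> space M1. wins_after n k X} \<times> {U \<in> space M2. arrivals_upto n x U = k})"
    unfolding A_def x_wins_iff_wins_after space_pair_measure using arrivals_upto_le by fastforce
  hence A_sets: "A \<in> sets (M1 \<Otimes>\<^sub>M M2)"
    by (auto simp: M1_def M2_def intro!: sets.finite_UN pair_measureI sets_PiM_X_pmf arrivals_upto_sets)
  (* the conditional win probability given the arrival times U *)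
  define F where "F U = 2 * ((1-p) ^ (n - arrivals_upto n x U) - (1-2*p) ^ (n - arrivals_upto n x U))" for U
  have U_section: "emeasure M1 ((\<lambda>X. (X, U)) -` A) = ennreal (F U)" if "U \<in> space M2" for U
  proof -
    have "(\<lambda>X. (X, U)) -` A = {X \<in> space M1. wins_after n (arrivals_upto n x U) X}"
      unfolding A_def x_wins_iff_wins_after space_pair_measure using that by auto
    hence "emeasure M1 ((\<lambda>X. (X, U)) -` A)
        = ennreal (measure M1 {X \<in> space M1. wins_after n (arrivals_upto n x U) X})"
      by (simp add: P1.emeasure_eq_measure)
    also have "measure M1 {X \<in> space M1. wins_after n (arrivals_upto n x U) X} = F U"
      unfolding M1_def F_def by (rule measure_wins_after[OF p arrivals_upto_le])
    finally show ?thesis .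
  qed
  have F_nonneg: "0 \<le> F U" for U
    using p unfolding F_def by (auto intro: power_mono)
  have F_int: "integrable M2 F" and F_integral: "(\<integral>U. F U \<partial>M2) = p_n n p x"
    using expectation_power_arrivals[OF x, of n] unfolding F_def M2_def
    by (auto simp: Bochner_Integration.integral_diff p_n_def algebra_simps)
  have p_n_nonneg: "0 \<le> p_n n p x"
    unfolding F_integral[symmetric] by (rule Bochner_Integration.integral_nonneg) (rule F_nonneg)
  have "emeasure (M1 \<Otimes>\<^sub>M M2) A = (\<integral>\<^sup>+U. emeasure M1 ((\<lambda>X. (X, U)) -` A) \<partial>M2)"
    by (rule P12.emeasure_pair_measure_alt2[OF A_sets])
  also have "\<dots> = (\<integral>\<^sup>+U. ennreal (F U) \<partial>M2)"
    by (rule nn_integral_cong) (simp add: U_section)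
  also have "\<dots> = ennreal (p_n n p x)"
    using nn_integral_eq_integral[OF F_int] F_nonneg F_integral by simp
  finally show ?thesis
    using p_n_nonneg by (simp add: win_prob_def model_def M1_def M2_def A_def measure_def)
qed


subsection \<open>The optimal threshold\<close>

lemma beta_props:
  assumes "n \<ge> 2"
  shows "beta n \<ge> 1" "beta n ^ (n-1) = 2"
proof -
  have pos: "real n - 1 > 0" using assms by simp
  show "beta n \<ge> 1" unfolding beta_def using pos by (simp add: ge_one_powr_ge_zero)
  have "beta n ^ (n-1) = 2 powr ((1 / (real n - 1)) * real (n-1))"
    unfolding beta_def by (simp add: powr_realpow[symmetric] powr_powr)
  also have "(1 / (real n - 1)) * real (n-1) = 1" using assms by (simp add: of_nat_diff)
  finally show "beta n ^ (n-1) = 2" by simp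
qed

text \<open>On [1/2,1] the function a^n - (2a-1)^n is maximal at a = \<beta>/(2\<beta>-1): its derivative
  n(a^(n-1) - 2(2a-1)^(n-1)) has the sign of a - \<beta>(2a-1), because \<beta>^(n-1) = 2.\<close>
lemma power_difference_max:
  fixes a b :: real
  assumes b1: "1 \<le> b" and bp: "b^(n-1) = 2" and a: "1/2 \<le> a" "a \<le> 1"
  shows "a^n - (2*a-1)^n \<le> (b/(2*b-1))^n - (2*(b/(2*b-1))-1)^n"
proof -
  define a0 where "a0 = b/(2*b-1)"
  have a0_range: "1/2 \<le> a0" "a0 \<le> 1" using b1 by (auto simp: a0_def field_simps)
  define f where "f a = a^n - (2*a-1)^n" for a :: real
  define f' where "f' a = real n * (a^(n-1) - 2 * (2*a-1)^(n-1))" for a :: real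
  have der: "DERIV f y :> f' y" for y
    unfolding f_def f'_def by (auto intro!: derivative_eq_intros simp: algebra_simps)
  have sign: "(2*y-1)^(n-1) * 2 = (b*(2*y-1))^(n-1)" for y
    by (simp only: power_mult_distrib bp mult.commute)
  have up: "f' y \<ge> 0" if "1/2 \<le> y" "y \<le> a0" for y
  proof -
    have "b*(2*y-1) \<le> y" using that b1 by (simp add: a0_def field_simps)
    hence "(b*(2*y-1))^(n-1) \<le> y^(n-1)" by (rule power_mono) (use that b1 in auto)
    thus ?thesis unfolding f'_def sign[symmetric] by simp
  qed
  have down: "f' y \<le> 0" if "a0 \<le> y" "y \<le> 1" for y
  proof -
    have "y \<le> b*(2*y-1)" using that b1 by (simp add: a0_def field_simps)
    hence "y^(n-1) \<le> (b*(2*y-1))^(n-1)" by (rule power_mono) (use that a0_range in auto)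
    thus ?thesis unfolding f'_def sign[symmetric] by (simp add: mult_nonneg_nonpos)
  qed
  have "f a \<le> f a0"
  proof (cases "a \<le> a0")
    case True
    show ?thesis
      by (rule DERIV_nonneg_imp_nondecreasing[OF True]) (use der up a in \<open>fastforce\<close>)
  next
    case False
    show ?thesis
      by (rule DERIV_nonpos_imp_nonincreasing[of a0 a f]) (use False der down a in \<open>fastforce+\<close>)
  qed
  thus ?thesis unfolding f_def a0_def .
qed

text \<open>Under the hypothesis on p, x_star lies in [0,1], maps to the maximiser a = \<beta>/(2\<beta>-1),
  and the maximal value simplifies to 2 (2\<beta>-1)^(1-n) using \<beta>^n = 2\<beta>.\<close>
lemma x_star_optimal:
  assumes n: "n \<ge> 2" and p: "0 < p" "p < 1/2" and pb: "p \<ge> (beta n - 1) / (2 * beta n - 1)"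
  shows "x_star n p \<in> {0..1}"
    and "\<forall>x\<in>{0..1}. p_n n p x \<le> p_n n p (x_star n p)"
    and "p_n n p (x_star n p) = opt_val n"
proof -
  define b where "b = beta n"
  have b1: "b \<ge> 1" and bp: "b^(n-1) = 2" using beta_props[OF n] by (auto simp: b_def)
  have d: "2*b - 1 \<ge> 1" using b1 by simp
  have pb': "b - 1 \<le> p * (2*b - 1)" using pb d unfolding b_def[symmetric] by (simp add: field_simps)
  have xs: "x_star n p = (1/p) * (((1-p) - (1-2*p)*b) / (2*b-1))" unfolding x_star_def b_def ..
  have "0 \<le> x_star n p"
    unfolding xs using p d pb' by (intro mult_nonneg_nonneg divide_nonneg_pos) (auto simp: algebra_simps)
  moreover have "x_star n p \<le> 1"
    unfolding xs using p d b1 by (simp add: field_simps)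
  ultimately show "x_star n p \<in> {0..1}" by simp
  have pn: "p_n n p x = 2 * ((1-p+p*x)^n - (2*(1-p+p*x)-1)^n)" for x
    unfolding p_n_def by (simp add: algebra_simps)
  have a_star: "1-p+p*x_star n p = b/(2*b-1)" unfolding xs using p d by (simp add: field_simps)
  show "\<forall>x\<in>{0..1}. p_n n p x \<le> p_n n p (x_star n p)"
  proof
    fix x :: real assume "x \<in> {0..1}"
    hence "0 \<le> p*x" "p*x \<le> p" using p by (auto intro: mult_left_le)
    hence "(1-p+p*x)^n - (2*(1-p+p*x)-1)^n \<le> (b/(2*b-1))^n - (2*(b/(2*b-1))-1)^n"
      using p by (intro power_difference_max[OF b1 bp]) auto
    thus "p_n n p x \<le> p_n n p (x_star n p)" unfolding pn a_star by simp
  qed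
  obtain m where m: "n = Suc m" using n by (cases n) auto
  have bn: "b^n = 2*b" using bp by (simp add: m)
  have "p_n n p (x_star n p) = 2 * ((b/(2*b-1))^n - (1/(2*b-1))^n)"
    unfolding pn a_star using d by (simp add: field_simps)
  also have "\<dots> = 2 * ((2*b-1) / (2*b-1)^n)" by (simp add: power_divide diff_divide_distrib bn)
  also have "(2*b-1) / (2*b-1)^n = (2*b-1) powr (1 - real n)"
    using d by (simp add: powr_diff powr_realpow)
  finally show "p_n n p (x_star n p) = opt_val n" unfolding opt_val_def b_def .
qed


subsection \<open>Monotonicity and limit of the optimal value\<close>

text \<open>opt_val m = 2 exp(-h(t)/t) with t = 1/(m-1), where h(t) = ln(2\<cdot>2^t - 1).\<close>
definition log_opt :: "real \<Rightarrow> real" where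
  "log_opt t = ln (2 * 2 powr t - 1)"

definition log_opt' :: "real \<Rightarrow> real" where
  "log_opt' t = 2 * 2 powr t * ln 2 / (2 * 2 powr t - 1)"

lemma log_opt_deriv: "t \<ge> 0 \<Longrightarrow> DERIV log_opt t :> log_opt' t"
proof -
  assume t: "t \<ge> 0"
  have "2 powr t \<ge> (1::real)" using t by (simp add: ge_one_powr_ge_zero)
  hence pos: "2 * 2 powr t - 1 > (0::real)" by simp
  show ?thesis unfolding log_opt_def log_opt'_def
    by (rule derivative_eq_intros refl | use pos in simp)+
qed

text \<open>The derivative u ln 2/(u-1), u = 2\<cdot>2^t, is strictly decreasing: log_opt is concave.\<close>
lemma log_opt'_strict_antimono:
  assumes "0 \<le> s" "s < t" shows "log_opt' t < log_opt' s"
proof -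
  define u where "u = 2 * 2 powr s"
  define v where "v = 2 * 2 powr t"
  have "1 \<le> 2 powr s" "2 powr s < (2::real) powr t" using assms by (auto simp: ge_one_powr_ge_zero)
  hence "1 < u" "u < v" by (auto simp: u_def v_def)
  hence "v / (v-1) < u / (u-1)" by (simp add: field_simps)
  hence "v / (v-1) * ln 2 < u / (u-1) * ln 2" by (rule mult_strict_right_mono) simp
  thus ?thesis unfolding log_opt'_def u_def[symmetric] v_def[symmetric] times_divide_eq_left .
qed

text \<open>Concavity and log_opt 0 = 0 make the secant slope log_opt t / t strictly decreasing.\<close>
lemma log_opt_slope_decreasing:
  assumes "0 < s" "s < t" shows "log_opt t / t < log_opt s / s"
proof -
  have log_opt_0: "log_opt 0 = 0" by (simp add: log_opt_def)
  obtain z1 where z1: "0 < z1" "z1 < s" "log_opt s - log_opt 0 = (s - 0) * log_opt' z1"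
    using MVT2[of 0 s log_opt log_opt'] assms log_opt_deriv by auto
  obtain z2 where z2: "s < z2" "z2 < t" "log_opt t - log_opt s = (t - s) * log_opt' z2"
    using MVT2[of s t log_opt log_opt'] assms log_opt_deriv by auto
  have lt: "log_opt' z2 < log_opt' z1" using z1 z2 by (intro log_opt'_strict_antimono) auto
  have hs: "log_opt s = s * log_opt' z1" using z1 log_opt_0 by simp
  have "log_opt t = s * log_opt' z1 + (t - s) * log_opt' z2" using z2 hs by simp
  also have "\<dots> < s * log_opt' z1 + (t - s) * log_opt' z1" using lt assms by simp
  also have "\<dots> = t * (log_opt s / s)" using hs assms by (simp add: field_simps)
  finally show ?thesis using assms by (simp add: field_simps)
qed

lemma opt_val_eq_exp:
  assumes "m \<ge> 2"
  shows "opt_val m = 2 * exp (- (log_opt (1/(real m - 1)) / (1/(real m - 1))))"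
proof -
  have pos: "2 * beta m - 1 > 0" using beta_props(1)[OF assms] by simp
  show ?thesis unfolding opt_val_def log_opt_def beta_def[symmetric] using pos
    by (simp add: powr_def algebra_simps)
qed

text \<open>t = 1/(m-1) decreases in m, so the slope, and with it -ln(opt_val/2), increases.\<close>
lemma opt_val_decreasing:
  assumes "m \<ge> 2" shows "opt_val (Suc m) < opt_val m"
proof -
  have "log_opt (1/(real m - 1)) / (1/(real m - 1)) < log_opt (1/(real (Suc m) - 1)) / (1/(real (Suc m) - 1))"
    using assms by (intro log_opt_slope_decreasing) (auto simp: field_simps)
  thus ?thesis using assms by (simp add: opt_val_eq_exp del: of_nat_Suc)
qed

text \<open>As m \<rightarrow> \<infinity>, t \<rightarrow> 0 and the slope tends to log_opt'(0) = 2 ln 2.\<close>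
lemma opt_val_limit: "opt_val \<longlonglongrightarrow> 1/2"
proof -
  have t_lim: "filterlim (\<lambda>m::nat. 1/(real m - 1)) (at 0) sequentially"
  proof (rule filterlim_atI)
    have "filterlim (\<lambda>m::nat. (-1) + real m) at_top sequentially"
      by (rule filterlim_tendsto_add_at_top[OF tendsto_const filterlim_real_sequentially])
    hence "filterlim (\<lambda>m::nat. real m - 1) at_top sequentially" by simp
    thus "((\<lambda>m::nat. 1/(real m - 1)) \<longlongrightarrow> 0) sequentially"
      using tendsto_inverse_0_at_top by (simp add: inverse_eq_divide)
    show "\<forall>\<^sub>F m in sequentially. 1 / (real m - 1) \<noteq> 0"
      using eventually_ge_at_top[of 2] by eventually_elim simp
  qed
  have "((\<lambda>t. (log_opt (0 + t) - log_opt 0) / t) \<longlongrightarrow> log_opt' 0) (at 0)"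
    using log_opt_deriv[of 0] by (simp add: DERIV_def)
  hence slope_lim: "((\<lambda>t. log_opt t / t) \<longlongrightarrow> 2 * ln 2) (at 0)"
    by (simp add: log_opt_def log_opt'_def)
  have "exp (2 * ln (2::real)) = exp (ln 2) * exp (ln 2)" by (simp only: mult_2 exp_add)
  hence "exp (2 * ln (2::real)) = 4" by simp
  hence e: "2 * exp (- (2 * ln 2)) = (1/2::real)" by (simp add: exp_minus)
  have "((\<lambda>m. 2 * exp (- (log_opt (1/(real m - 1)) / (1/(real m - 1))))) \<longlongrightarrow> 1/2) sequentially"
    unfolding e[symmetric] by (intro tendsto_intros filterlim_compose[OF slope_lim t_lim])
  thus ?thesis
    by (rule Lim_transform_eventually) (use eventually_ge_at_top[of 2] in \<open>eventually_elim, simp add: opt_val_eq_exp\<close>)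
qed


theorem mainTheorem9:
  fixes n :: nat and p :: real
  assumes "n \<ge> 2" and "0 < p" and "p < 1/2"
  shows "(\<forall>x\<in>{0..1}. win_prob n p x = p_n n p x)
       \<and> (p \<ge> (beta n - 1) / (2 * beta n - 1) \<longrightarrow>
            x_star n p \<in> {0..1}
          \<and> (\<forall>x\<in>{0..1}. p_n n p x \<le> p_n n p (x_star n p))
          \<and> p_n n p (x_star n p) = opt_val n)
       \<and> (\<forall>m\<ge>2. opt_val (Suc m) < opt_val m)
       \<and> opt_val \<longlonglongrightarrow> 1/2"
proof -
  have "\<forall>x\<in>{0..1}. win_prob n p x = p_n n p x"
    using assms(2,3) by (auto intro: win_prob_eq_p_n)
  moreover have "p \<ge> (beta n - 1) / (2 * beta n - 1) \<longrightarrow>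
            x_star n p \<in> {0..1}
          \<and> (\<forall>x\<in>{0..1}. p_n n p x \<le> p_n n p (x_star n p))
          \<and> p_n n p (x_star n p) = opt_val n"
    using x_star_optimal[OF assms] by blast
  ultimately show ?thesis using opt_val_decreasing opt_val_limit by blast
qed

end
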